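(* In the setting described in the context (the run $\Omega$ generated by the counterstrategy $\mathcal{E}$), every politeral unit has at most one opposite politeral unit.
   Context: Formulas are built from atoms by $\neg$ (on atoms only), binary $\wedge,\vee$ and unary $!$ (branching recurrence) and $?$ (branching corecurrence). Units. Fix a formula $\mathbb{F}_0$. Oformulas are occurrences of subformulas of $\mathbb{F}_0$. Politerals are occurrences of literals $P$ or $\neg P$ not in the scope of $\neg$. The modal depth of an oformula is the number of its proper superoccurrences of the form $!E$ or $?E$. A unit is $E[\vec x]$, with $E$ an oformula and $\vec x$ a tuple of infinite bitstrings of length equal to the modal depth of $E$. Parenthood: $G_i[\vec x]$ ($i=0,1$) are the children of $(G_0\wedge G_1)[\vec x]$ and of $(G_0\vee G_1)[\vec x]$; the units $G[\vec x,y]$ for all infinite bitstrings $y$ are the children of $!G[\vec x]$ and of $?G[\vec x]$. The $\mathbb{F}_0$-origin $\tilde E$ of $E[\vec x]$ is $E$. A politeral unit is one whose origin is a politeral. Funits. A funit is $E[\vec w]$ with $\vec w$ a tuple of finite bitstrings of length equal to the modal depth of $E$. Funits have the analogous parenthood relation, with children $G[\vec w,u]$ for finite bitstrings $u$. Addresses: the address of $\mathbb{F}_0[\,]$ is the empty string; if $\alpha$ is the address of $E[\vec w]$, then $G_i[\vec w]$ has address $\alpha i.$ (the bit $i$ followed by a period), and $G[\vec w,u]$ has address $\alpha u.$. A funit $E[w_1,\dots,w_n]$ is a funital restriction of the unit $E[x_1,\dots,x_n]$ iff each $w_j$ is a prefix of $x_j$. Its height is $\max_j|w_j|$ (or $0$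 if $n=0$), and it is regular iff all $w_j$ have the same length. Making the numeric move $a$ (a decimal numeral) in a politeral funit with address $\alpha$ means making the move $\alpha a$. A move made in a funit counts as made in every unital extension of it. Runs and projections. For a run $\Theta$ (a sequence of labmoves $\wp\beta$, $\wp\in\{\top,\bot\}$) and a string $\alpha$, $\Theta^\alpha$ keeps the labmoves whose move begins with $\alpha$ and deletes that prefix. For an infinite bitstring $y$, $\Theta^{\preceq y}$ keeps the labmoves $\wp\,u.\beta$ with $u$ a finite prefix of $y$ and deletes "$u.$". The projection of a run $\Omega$ on $\mathbb{F}_0[\,]$ is $\Omega$. If $\Theta$ is the projection on $E[\vec x]$, then the projection on the child $G_i[\vec x]$ of a $\wedge$/$\vee$-unit is $\Theta^{i.}$, and on the child $G[\vec x,y]$ of a $!$/$?$-unit it is $\Theta^{\preceq y}$. The run $\Omega$. For a position $\Phi$, a funit is $\Phi$-active iff $\Phi$ contains some move (by either player) of the form $\alpha\beta$ with $\alpha$ its address. A $\Phi$-prompt is a regular politeral funit $L[\vec w]$ such that either $\vec w$ is empty, or its height equals the least integer exceeding the heights of all $\Phi$-active funits. $\Omega$ is an infinite run produced by a play proceeding in rounds $1,2,3,\dots$. At the start of each round, with $\Phi$ the current position, player $\bot$ (the counterstrategy $\mathcal{E}$) lists all $\Phi$-prompts $L_1[\vec w_1],\dots,L_n[\vec w_n]$ in lexicographic order. Then, for $i=1,\dots,n$ in turn, $\bot$ makes the numeric move $a$ in $L_i[\vec w_i]$, where $a$ is the least natural number not yet made as a numeric move in any politeral funit by either player. After this, the adversary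 $\top$ (an arbitrary HPM) makes at most one move. It is assumed that $\Omega$ is legal: every move in it, by either player, has the form $\alpha a$ with $\alpha$ the address of a politeral funit and $a$ a decimal numeral. Opposite. Politeral units $L,M$ are opposite iff $\tilde L,\tilde M$ are literals one of which is the negation of the other and, for each $\wp\in\{\top,\bot\}$, the set of $\wp$-labeled moves in the projection of $\Omega$ on $L$ equals the set of $\neg\wp$-labeled moves in the projection of $\Omega$ on $M$. *)

theory Defs
  imports Main "HOL-Library.Char_ord" "HOL-Library.List_Lexorder"
begin

text \<open>Literals: Lit True P is the atom P, Lit False P is its negation.
  Negation is applied to atoms only.\<close>
datatype 'a fmla =
    Lit bool 'a
  | Conj "'a fmla" "'a fmla"
  | Disj "'a fmla" "'a fmla"
  | Bang "'a fmla"
  | Ques "'a fmla"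

text \<open>Oformulas (occurrences of subformulas of F0) are represented by paths:
  0/1 selects the left/right conjunct/disjunct, 0 selects the unique child of a
  !- or ?-node.\<close>
type_synonym path = "nat list"

fun sub :: "'a fmla \<Rightarrow> path \<Rightarrow> 'a fmla option" where
  "sub F [] = Some F"
| "sub (Conj A B) (0 # p) = sub A p"
| "sub (Conj A B) (Suc 0 # p) = sub B p"
| "sub (Disj A B) (0 # p) = sub A p"
| "sub (Disj A B) (Suc 0 # p) = sub B p"
| "sub (Bang A) (0 # p) = sub A p"
| "sub (Ques A) (0 # p) = sub A p"
| "sub _ _ = None"

fun mdepth :: "'a fmla \<Rightarrow> path \<Rightarrow> nat" where
  "mdepth (Conj A B) (0 # p) = mdepth A p"
| "mdepth (Conj A B) (Suc 0 # p) = mdepth B p"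
| "mdepth (Disj A B) (0 # p) = mdepth A p"
| "mdepth (Disj A B) (Suc 0 # p) = mdepth B p"
| "mdepth (Bang A) (0 # p) = Suc (mdepth A p)"
| "mdepth (Ques A) (0 # p) = Suc (mdepth A p)"
| "mdepth _ _ = 0"

definition is_occ :: "'a fmla \<Rightarrow> path \<Rightarrow> bool" where
  "is_occ F p \<longleftrightarrow> sub F p \<noteq> None"

definition is_politeral :: "'a fmla \<Rightarrow> path \<Rightarrow> bool" where
  "is_politeral F p \<longleftrightarrow> (\<exists>b P. sub F p = Some (Lit b P))"

text \<open>Infinite bitstrings: nat \<Rightarrow> bool; finite bitstrings: bool list.\<close>
type_synonym ibits = "nat \<Rightarrow> bool"

definition is_unit :: "'a fmla \<Rightarrow> path \<times> ibits list \<Rightarrow> bool" where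
  "is_unit F u \<longleftrightarrow> is_occ F (fst u) \<and> length (snd u) = mdepth F (fst u)"

definition is_funit :: "'a fmla \<Rightarrow> path \<times> bool list list \<Rightarrow> bool" where
  "is_funit F f \<longleftrightarrow> is_occ F (fst f) \<and> length (snd f) = mdepth F (fst f)"

definition politeral_unit :: "'a fmla \<Rightarrow> path \<times> ibits list \<Rightarrow> bool" where
  "politeral_unit F u \<longleftrightarrow> is_unit F u \<and> is_politeral F (fst u)"

definition politeral_funit :: "'a fmla \<Rightarrow> path \<times> bool list list \<Rightarrow> bool" where
  "politeral_funit F f \<longleftrightarrow> is_funit F f \<and> is_politeral F (fst f)"

definition bchar :: "bool \<Rightarrow> char" where
  "bchar b = (if b then CHR ''1'' else CHR ''0'')"

fun faddr :: "'a fmla \<Rightarrow> path \<Rightarrow> bool list list \<Rightarrow> string" where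
  "faddr (Conj A B) (0 # p) ws = ''0.'' @ faddr A p ws"
| "faddr (Conj A B) (Suc 0 # p) ws = ''1.'' @ faddr B p ws"
| "faddr (Disj A B) (0 # p) ws = ''0.'' @ faddr A p ws"
| "faddr (Disj A B) (Suc 0 # p) ws = ''1.'' @ faddr B p ws"
| "faddr (Bang A) (0 # p) (w # ws) = map bchar w @ ''.'' @ faddr A p ws"
| "faddr (Ques A) (0 # p) (w # ws) = map bchar w @ ''.'' @ faddr A p ws"
| "faddr _ _ _ = []"

definition addr :: "'a fmla \<Rightarrow> path \<times> bool list list \<Rightarrow> string" where
  "addr F f = faddr F (fst f) (snd f)"

definition height :: "bool list list \<Rightarrow> nat" where
  "height ws = foldr max (map length ws) 0"

definition regular :: "bool list list \<Rightarrow> bool" where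
  "regular ws \<longleftrightarrow> (\<forall>w\<in>set ws. \<forall>v\<in>set ws. length w = length v)"

datatype player = Top | Bot

fun neg_player :: "player \<Rightarrow> player" where
  "neg_player Top = Bot" | "neg_player Bot = Top"

type_synonym labmove = "player \<times> string"

text \<open>A (possibly infinite) run, or a projection of one, is represented as a
  sequence nat \<Rightarrow> labmove option: deleted labmoves are None (the
  order of the remaining labmoves is preserved).\<close>
type_synonym run = "nat \<Rightarrow> labmove option"

function dec :: "nat \<Rightarrow> string" where
  "dec n = (if n < 10 then [char_of (48 + n)]
            else dec (n div 10) @ [char_of (48 + n mod 10)])"
  by auto
termination by (relation "measure id") auto

definition proj_pref :: "string \<Rightarrow> run \<Rightarrow> run" where
  "proj_pref \<alpha> \<Theta> n = (case \<Theta> n of None \<Rightarrow> None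
     | Some (q, m) \<Rightarrow> if take (length \<alpha>) m = \<alpha> then Some (q, drop (length \<alpha>) m) else None)"

text \<open>Theta^{<=y}: keep labmoves u.beta with u a finite prefix of y; delete "u.".\<close>
definition proj_inf :: "ibits \<Rightarrow> run \<Rightarrow> run" where
  "proj_inf y \<Theta> n = (case \<Theta> n of None \<Rightarrow> None
     | Some (q, m) \<Rightarrow>
         (let k = length (takeWhile (\<lambda>c. c \<noteq> CHR ''.'') m) in
          if k < length m \<and> take k m = map bchar (map y [0..<k])
          then Some (q, drop (Suc k) m) else None))"

text \<open>Projection of a run on a unit E[xs] (given by path and tuple of infinite bitstrings).\<close>
fun proj :: "'a fmla \<Rightarrow> path \<Rightarrow> ibits list \<Rightarrow> run \<Rightarrow> run" where
  "proj (Conj A B) (0 # p) xs \<Theta> = proj A p xs (proj_pref ''0.'' \<Theta>)"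
| "proj (Conj A B) (Suc 0 # p) xs \<Theta> = proj B p xs (proj_pref ''1.'' \<Theta>)"
| "proj (Disj A B) (0 # p) xs \<Theta> = proj A p xs (proj_pref ''0.'' \<Theta>)"
| "proj (Disj A B) (Suc 0 # p) xs \<Theta> = proj B p xs (proj_pref ''1.'' \<Theta>)"
| "proj (Bang A) (0 # p) (y # xs) \<Theta> = proj A p xs (proj_inf y \<Theta>)"
| "proj (Ques A) (0 # p) (y # xs) \<Theta> = proj A p xs (proj_inf y \<Theta>)"
| "proj _ _ _ \<Theta> = \<Theta>"

definition moves_of :: "player \<Rightarrow> run \<Rightarrow> string set" where
  "moves_of q \<Theta> = {m. \<exists>n. \<Theta> n = Some (q, m)}"

type_synonym position = "labmove list"

definition active :: "'a fmla \<Rightarrow> position \<Rightarrow> path \<times> bool list list \<Rightarrow> bool" where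
  "active F \<Phi> f \<longleftrightarrow> is_funit F f \<and> (\<exists>q \<beta>. (q, addr F f @ \<beta>) \<in> set \<Phi>)"

definition prompt_height :: "'a fmla \<Rightarrow> position \<Rightarrow> nat" where
  "prompt_height F \<Phi> = (LEAST h. \<forall>f. active F \<Phi> f \<longrightarrow> height (snd f) < h)"

definition is_prompt :: "'a fmla \<Rightarrow> position \<Rightarrow> path \<times> bool list list \<Rightarrow> bool" where
  "is_prompt F \<Phi> f \<longleftrightarrow> politeral_funit F f \<and> regular (snd f) \<and>
     (snd f = [] \<or> height (snd f) = prompt_height F \<Phi>)"

definition prompt_addrs :: "'a fmla \<Rightarrow> position \<Rightarrow> string list" where
  "prompt_addrs F \<Phi> = sorted_list_of_set (addr F ` {f. is_prompt F \<Phi> f})"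

definition used_nums :: "'a fmla \<Rightarrow> position \<Rightarrow> nat set" where
  "used_nums F \<Phi> = {a. \<exists>q f. politeral_funit F f \<and> (q, addr F f @ dec a) \<in> set \<Phi>}"

fun bot_moves :: "'a fmla \<Rightarrow> position \<Rightarrow> string list \<Rightarrow> position" where
  "bot_moves F \<Phi> [] = \<Phi>"
| "bot_moves F \<Phi> (\<alpha> # \<alpha>s) =
     bot_moves F (\<Phi> @ [(Bot, \<alpha> @ dec (LEAST a. a \<notin> used_nums F \<Phi>))]) \<alpha>s"

text \<open>Position after k rounds, given the adversary's choices t (at most one
  move per round, made after the counterstrategy's moves of that round).\<close>
fun pos_after :: "'a fmla \<Rightarrow> (nat \<Rightarrow> string option) \<Rightarrow> nat \<Rightarrow> position" where
  "pos_after F t 0 = []"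
| "pos_after F t (Suc k) =
     (let \<Phi>' = bot_moves F (pos_after F t k) (prompt_addrs F (pos_after F t k))
      in \<Phi>' @ (case t k of None \<Rightarrow> [] | Some m \<Rightarrow> [(Top, m)]))"

definition generated_run :: "'a fmla \<Rightarrow> (nat \<Rightarrow> labmove) \<Rightarrow> bool" where
  "generated_run F \<Omega> \<longleftrightarrow> (\<exists>t. \<forall>k n. n < length (pos_after F t k) \<longrightarrow> \<Omega> n = pos_after F t k ! n)"

definition legal_run :: "'a fmla \<Rightarrow> (nat \<Rightarrow> labmove) \<Rightarrow> bool" where
  "legal_run F \<Omega> \<longleftrightarrow> (\<forall>n. \<exists>f a. politeral_funit F f \<and> snd (\<Omega> n) = addr F f @ dec a)"

definition unit_proj :: "'a fmla \<Rightarrow> (nat \<Rightarrow> labmove) \<Rightarrow> path \<times> ibits list \<Rightarrow> run" where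
  "unit_proj F \<Omega> u = proj F (fst u) (snd u) (\<lambda>n. Some (\<Omega> n))"

definition opposite :: "'a fmla \<Rightarrow> (nat \<Rightarrow> labmove) \<Rightarrow> path \<times> ibits list \<Rightarrow> path \<times> ibits list \<Rightarrow> bool" where
  "opposite F \<Omega> L M \<longleftrightarrow> politeral_unit F L \<and> politeral_unit F M \<and>
     (\<exists>b P. sub F (fst L) = Some (Lit b P) \<and> sub F (fst M) = Some (Lit (\<not> b) P)) \<and>
     (\<forall>q. moves_of q (unit_proj F \<Omega> L) = moves_of (neg_player q) (unit_proj F \<Omega> M))"

end

theory Submission
  imports Defs
begin

(* Both opposites M and M' of L satisfy: the Bot moves of the projection on M are the Top
   moves of the projection on L, hence Bot's moves on M and on M' coincide.  In every round,
   Bot makes a fresh numeric move in the prompt funit of M (its funital restriction of the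
   current prompt height); and since the prompt height strictly grows, if M differs from M'
   some round's prompt funit of M is not a funital restriction of M'.  That move then shows
   up in the projection on M', i.e. the same numeral is also played at an address of a
   funital restriction of M'.  Because Bot never repeats a numeral, both are the same move,
   and since addresses are injective the two funits coincide -- a contradiction. *)

(* Unfolding the recursive equation of dec inside simp would not terminate. *)
declare dec.simps [simp del]

section \<open>Numerals and addresses are uniquely readable\<close>

lemma digit_char_inj:
  assumes "a < 10" "b < 10" "(char_of (48 + a) :: char) = char_of (48 + b)"
  shows "a = (b :: nat)"
proof -
  have "(of_char (char_of (48 + a) :: char) :: nat) = of_char (char_of (48 + b) :: char)"
    using assms(3) by simp
  with assms(1,2) show ?thesis by simp
qed

lemma dec_nonempty: "dec n \<noteq> []"
  by (subst dec.simps) simp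

lemma dec_no_dot: "CHR ''.'' \<notin> set (dec n)"
proof (induction n rule: dec.induct)
  case (1 n)
  have digit: "char_of (48 + d) \<noteq> CHR ''.''" if "d < 10" for d :: nat
  proof
    assume "char_of (48 + d) = CHR ''.''"
    then have "(of_char (char_of (48 + d) :: char) :: nat) = of_char CHR ''.''" by simp
    with that show False by simp
  qed
  show ?case
    using 1 digit[of n] digit[of "n mod 10"] by (subst dec.simps) auto
qed

lemma dec_inj: "inj dec"
proof (rule injI)
  fix a b :: nat
  assume "dec a = dec b"
  then show "a = b"
  proof (induction a arbitrary: b rule: less_induct)
    case (less a)
    have one_digit: "length (dec n) = 1 \<longleftrightarrow> n < 10" for n
      using dec_nonempty[of "n div 10"] by (subst dec.simps) auto
    then have "a < 10 \<longleftrightarrow> b < 10" using less.prems by metis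
    then consider "a < 10" "b < 10" | "\<not> a < 10" "\<not> b < 10" by blast
    then show ?case
    proof cases
      case 1
      then show ?thesis using less.prems by (subst (asm) (1 2) dec.simps) (auto intro: digit_char_inj)
    next
      case 2
      then have "dec (a div 10) = dec (b div 10)"
        and "(char_of (48 + a mod 10) :: char) = char_of (48 + b mod 10)"
        using less.prems by (subst (asm) (1 2) dec.simps; simp)+
      then have "a div 10 = b div 10" "a mod 10 = b mod 10"
        using less.IH[of "a div 10"] 2 digit_char_inj by auto
      then show ?thesis by (metis div_mult_mod_eq)
    qed
  qed
qed

(* Every address is empty or ends with a dot ... *)
lemma faddr_shape: "faddr F p ws = [] \<or> last (faddr F p ws) = CHR ''.''"
  by (induction F p ws rule: faddr.induct) auto

(* ... so the numeral of a move is the maximal dot-free suffix of the move. *)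
lemma no_dot_suffix:
  assumes "x = [] \<or> last x = CHR ''.''" "CHR ''.'' \<notin> set d"
  shows "takeWhile (\<lambda>c. c \<noteq> CHR ''.'') (rev (x @ d)) = rev d"
proof -
  have "takeWhile (\<lambda>c. c \<noteq> CHR ''.'') (rev x) = []"
    using assms(1) by (cases x rule: rev_cases) auto
  with assms(2) show ?thesis by (subst rev_append, subst takeWhile_append2) auto
qed

lemma addr_numeral_inj:
  assumes "addr F f @ dec a = addr G g @ dec b"
  shows "a = b"
proof -
  have "rev (dec a) = rev (dec b)"
    using no_dot_suffix[OF faddr_shape dec_no_dot, of F "fst f" "snd f" a]
      no_dot_suffix[OF faddr_shape dec_no_dot, of G "fst g" "snd g" b] assms
    unfolding addr_def by metis
  then show ?thesis using dec_inj by (simp add: inj_eq)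
qed

lemma split_at_first:
  assumes "u @ c # r = u' @ c # r'" "c \<notin> set u" "c \<notin> set u'"
  shows "u = u' \<and> r = r'"
proof -
  have "takeWhile (\<lambda>x. x \<noteq> c) (u @ c # r) = takeWhile (\<lambda>x. x \<noteq> c) (u' @ c # r')"
    using assms(1) by simp
  then have "u = u'" using assms(2,3) by (subst (asm) (1 2) takeWhile_append2) auto
  with assms(1) show ?thesis by simp
qed

lemma bits_no_dot: "CHR ''.'' \<notin> set (map bchar w)"
  by (auto simp: bchar_def)

lemma bits_addr_inj:
  assumes "map bchar w @ CHR ''.'' # r = map bchar w' @ CHR ''.'' # r'"
  shows "w = w' \<and> r = r'"
proof -
  have "inj bchar" by (auto simp: inj_def bchar_def split: if_splits)
  then show ?thesis
    using split_at_first[OF assms bits_no_dot bits_no_dot] by (auto simp: inj_map_eq_map)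
qed

lemma occ_paths: "sub F p \<noteq> None \<Longrightarrow> set p \<subseteq> {0, 1} \<and> length p \<le> size F"
  by (induction F p rule: sub.induct) auto

lemma mdepth_Nil [simp]: "mdepth F [] = 0"
  by (cases F) auto

lemma faddr_Nil_iff:
  "sub F p \<noteq> None \<Longrightarrow> length ws = mdepth F p \<Longrightarrow> faddr F p ws = [] \<longleftrightarrow> p = []"
  by (induction F p ws rule: faddr.induct) (auto elim: sub.elims mdepth.elims)

lemma faddr_inj:
  "sub F p \<noteq> None \<Longrightarrow> length ws = mdepth F p \<Longrightarrow>
   sub F p' \<noteq> None \<Longrightarrow> length ws' = mdepth F p' \<Longrightarrow>
   faddr F p ws = faddr F p' ws' \<Longrightarrow> p = p' \<and> ws = ws'"
proof (induction F p ws arbitrary: p' ws' rule: faddr.induct)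
  case (1 A B p ws)
  obtain x q where p': "p' = x # q" using "1.prems"(5) by (cases p') auto
  have "x = 0 \<or> x = 1" using occ_paths[OF "1.prems"(3)] p' by auto
  then show ?case using "1.IH"[of q ws'] "1.prems" p' by auto
next
  case (2 A B p ws)
  obtain x q where p': "p' = x # q" using "2.prems"(5) by (cases p') auto
  have "x = 0 \<or> x = 1" using occ_paths[OF "2.prems"(3)] p' by auto
  then show ?case using "2.IH"[of q ws'] "2.prems" p' by auto
next
  case (3 A B p ws)
  obtain x q where p': "p' = x # q" using "3.prems"(5) by (cases p') auto
  have "x = 0 \<or> x = 1" using occ_paths[OF "3.prems"(3)] p' by auto
  then show ?case using "3.IH"[of q ws'] "3.prems" p' by auto
next
  case (4 A B p ws)
  obtain x q where p': "p' = x # q" using "4.prems"(5) by (cases p') auto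
  have "x = 0 \<or> x = 1" using occ_paths[OF "4.prems"(3)] p' by auto
  then show ?case using "4.IH"[of q ws'] "4.prems" p' by auto
next
  case (5 A p w ws)
  obtain x q where p': "p' = x # q" using "5.prems"(5) by (cases p') auto
  have x: "x = 0" using occ_paths[OF "5.prems"(3)] "5.prems"(3) p' by auto
  obtain w' vs' where ws': "ws' = w' # vs'" using "5.prems"(4) p' x by (cases ws') auto
  have "w = w'" "faddr A p ws = faddr A q vs'"
    using "5.prems"(5) p' x ws' by (auto dest: bits_addr_inj)
  then show ?case using "5.IH"[of q vs'] "5.prems" p' x ws' by auto
next
  case (6 A p w ws)
  obtain x q where p': "p' = x # q" using "6.prems"(5) by (cases p') auto
  have x: "x = 0" using occ_paths[OF "6.prems"(3)] "6.prems"(3) p' by auto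
  obtain w' vs' where ws': "ws' = w' # vs'" using "6.prems"(4) p' x by (cases ws') auto
  have "w = w'" "faddr A p ws = faddr A q vs'"
    using "6.prems"(5) p' x ws' by (auto dest: bits_addr_inj)
  then show ?case using "6.IH"[of q vs'] "6.prems" p' x ws' by auto
qed (metis faddr.simps faddr_Nil_iff mdepth_Nil length_0_conv)+

lemma addr_inj: "is_funit F f \<Longrightarrow> is_funit F g \<Longrightarrow> addr F f = addr F g \<Longrightarrow> f = g"
  unfolding is_funit_def is_occ_def addr_def using faddr_inj by (metis prod.collapse)

(* The bitstrings of a funit are spelled out in its address. *)
lemma height_le_faddr:
  "sub F p \<noteq> None \<Longrightarrow> length ws = mdepth F p \<Longrightarrow> height ws \<le> length (faddr F p ws)"
  by (induction F p ws rule: faddr.induct) (auto simp: height_def)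

section \<open>Projections on units\<close>

(* The funital restrictions of a unit are the funits whose bitstrings are prefixes of its
   infinite bitstrings. *)
definition funital_restr :: "bool list list \<Rightarrow> ibits list \<Rightarrow> bool" where
  "funital_restr ws ys \<longleftrightarrow> list_all2 (\<lambda>w y. w = map y [0..<length w]) ws ys"

lemma prefix_of_ibits: "w = map y [0..<length w] \<longleftrightarrow> (\<exists>k. w = map y [0..<k])"
  by auto

lemma funital_restr_Cons2:
  "funital_restr ws (y # ys) \<longleftrightarrow> (\<exists>k vs. ws = map y [0..<k] # vs \<and> funital_restr vs ys)"
  unfolding funital_restr_def list_all2_Cons2 prefix_of_ibits by blast

lemma ex_funital_restr_Cons2:
  "(\<exists>ws. funital_restr ws (y # ys) \<and> P ws) \<longleftrightarrow>
   (\<exists>vs. funital_restr vs ys \<and> (\<exists>k. P (map y [0..<k] # vs)))"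
  unfolding funital_restr_Cons2 by blast

lemma proj_pref_Some: "proj_pref \<alpha> \<Theta> n = Some (q, s) \<longleftrightarrow> \<Theta> n = Some (q, \<alpha> @ s)"
  unfolding proj_pref_def
  by (cases "\<Theta> n") (auto split: if_splits, metis append_take_drop_id)

lemma proj_inf_Some:
  "proj_inf y \<Theta> n = Some (q, s) \<longleftrightarrow>
   (\<exists>k. \<Theta> n = Some (q, map bchar (map y [0..<k]) @ CHR ''.'' # s))"
proof
  assume proj: "proj_inf y \<Theta> n = Some (q, s)"
  then obtain m where m: "\<Theta> n = Some (q, m)"
    unfolding proj_inf_def by (auto simp: Let_def split: option.splits if_splits)
  define k where "k = length (takeWhile (\<lambda>c. c \<noteq> CHR ''.'') m)"
  have k: "k < length m" "take k m = map bchar (map y [0..<k])" "s = drop (Suc k) m"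
    using proj unfolding proj_inf_def m k_def by (simp_all add: Let_def split: if_splits)
  have "m ! k = CHR ''.''"
    using k(1) nth_length_takeWhile[of "\<lambda>c. c \<noteq> CHR ''.''" m] unfolding k_def by blast
  then have "m = take k m @ CHR ''.'' # drop (Suc k) m"
    using Cons_nth_drop_Suc[OF k(1)] by simp
  with k(2,3) m show "\<exists>k. \<Theta> n = Some (q, map bchar (map y [0..<k]) @ CHR ''.'' # s)"
    by metis
next
  assume "\<exists>k. \<Theta> n = Some (q, map bchar (map y [0..<k]) @ CHR ''.'' # s)"
  then obtain k where "\<Theta> n = Some (q, map bchar (map y [0..<k]) @ CHR ''.'' # s)" by blast
  moreover have "takeWhile (\<lambda>c. c \<noteq> CHR ''.'') (map bchar (map y [0..<k]) @ CHR ''.'' # s)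
      = map bchar (map y [0..<k])"
    using bits_no_dot[of "map y [0..<k]"] by (subst takeWhile_append2) (auto simp: bchar_def)
  ultimately show "proj_inf y \<Theta> n = Some (q, s)" by (simp add: proj_inf_def Let_def)
qed

lemma proj_Some_iff:
  "sub F p \<noteq> None \<Longrightarrow> length ys = mdepth F p \<Longrightarrow>
   proj F p ys \<Theta> n = Some (q, r) \<longleftrightarrow>
   (\<exists>ws. funital_restr ws ys \<and> \<Theta> n = Some (q, faddr F p ws @ r))"
proof (induction F p ys \<Theta> rule: proj.induct)
  case (5 A p y ys \<Theta>)
  then show ?case by (simp add: proj_inf_Some ex_funital_restr_Cons2)
next
  case (6 A p y ys \<Theta>)
  then show ?case by (simp add: proj_inf_Some ex_funital_restr_Cons2)
qed (auto simp: proj_pref_Some funital_restr_def)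

lemma unit_proj_moves:
  assumes "is_unit F M"
  shows "m \<in> moves_of q (unit_proj F \<Omega> M) \<longleftrightarrow>
    (\<exists>n ws. funital_restr ws (snd M) \<and> \<Omega> n = (q, addr F (fst M, ws) @ m))"
  using assms proj_Some_iff[of F "fst M" "snd M"]
  unfolding moves_of_def unit_proj_def is_unit_def is_occ_def addr_def by auto

lemma restr_politeral_funit:
  "politeral_unit F M \<Longrightarrow> funital_restr ws (snd M) \<Longrightarrow> politeral_funit F (fst M, ws)"
  unfolding politeral_unit_def politeral_funit_def is_unit_def is_funit_def funital_restr_def
  by (simp add: list_all2_lengthD)

section \<open>Prompts\<close>

lemma finite_occs: "finite {p. sub F p \<noteq> None}"
proof (rule finite_subset)
  show "{p. sub F p \<noteq> None} \<subseteq> {p. set p \<subseteq> {0, 1} \<and> length p \<le> size F}"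
    using occ_paths by blast
  show "finite {p. set p \<subseteq> {0, 1::nat} \<and> length p \<le> size F}"
    by (rule finite_lists_length_le) simp
qed

lemma height_const: "\<forall>v\<in>set ws. length v = l \<Longrightarrow> ws \<noteq> [] \<Longrightarrow> height ws = l"
proof (induction ws)
  case (Cons v ws)
  then show ?case by (cases "ws = []") (simp_all add: height_def)
qed simp

lemma height_regular: "regular ws \<Longrightarrow> w \<in> set ws \<Longrightarrow> height ws = length w"
  unfolding regular_def by (metis empty_iff height_const list.set(1))

(* At any position there are finitely many prompts, so their sorted list lists them all. *)
lemma finite_prompts: "finite {f. is_prompt F \<Phi> f}"
proof -
  let ?H = "prompt_height F \<Phi>"
  let ?tuples = "\<lambda>p. {ws. set ws \<subseteq> {w :: bool list. set w \<subseteq> UNIV \<and> length w = ?H} \<and> length ws = mdepth F p}"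
  have "{f. is_prompt F \<Phi> f} \<subseteq> Sigma {p. sub F p \<noteq> None} ?tuples"
    by (auto simp: is_prompt_def politeral_funit_def is_funit_def is_occ_def dest: height_regular)
  moreover have "finite (Sigma {p. sub F p \<noteq> None} ?tuples)"
    by (intro finite_SigmaI finite_occs finite_lists_length_eq) simp_all
  ultimately show ?thesis by (rule finite_subset)
qed

lemma set_prompt_addrs: "set (prompt_addrs F \<Phi>) = addr F ` {f. is_prompt F \<Phi> f}"
  unfolding prompt_addrs_def by (simp add: finite_prompts)

lemma prompt_height_bound:
  assumes "active F \<Phi> f"
  shows "height (snd f) < prompt_height F \<Phi>"
proof -
  let ?S = "sum_list (map (length \<circ> snd) \<Phi>)"
  have "height (snd f) < Suc ?S" if act: "active F \<Phi> f" for f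
  proof -
    obtain q \<beta> where fu: "is_funit F f" and mem: "(q, addr F f @ \<beta>) \<in> set \<Phi>"
      using act unfolding active_def by blast
    have "height (snd f) \<le> length (addr F f)"
      using fu height_le_faddr unfolding is_funit_def is_occ_def addr_def by blast
    also have "\<dots> \<le> length (addr F f @ \<beta>)" by simp
    also have "\<dots> \<le> ?S"
      using mem by (intro member_le_sum_list) force+
    finally show ?thesis by simp
  qed
  then show ?thesis
    using assms LeastI_ex[of "\<lambda>h. \<forall>f. active F \<Phi> f \<longrightarrow> height (snd f) < h"]
    unfolding prompt_height_def by blast
qed

lemma finite_used_nums: "finite (used_nums F \<Phi>)"
proof (rule finite_subset)
  let ?suffixes = "\<Union>(q, m)\<in>set \<Phi>. (\<lambda>i. drop i m) ` {..length m}"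
  show "used_nums F \<Phi> \<subseteq> dec -` ?suffixes"
  proof
    fix a assume "a \<in> used_nums F \<Phi>"
    then obtain q f where mem: "(q, addr F f @ dec a) \<in> set \<Phi>"
      unfolding used_nums_def by blast
    have "dec a = drop (length (addr F f)) (addr F f @ dec a)" by simp
    then have "dec a \<in> (\<lambda>i. drop i (addr F f @ dec a)) ` {..length (addr F f @ dec a)}"
      by (rule image_eqI[where x = "length (addr F f)"]) auto
    with mem show "a \<in> dec -` ?suffixes" by blast
  qed
  show "finite (dec -` ?suffixes)"
    by (intro finite_vimageI dec_inj) auto
qed

lemma least_unused: "(LEAST a. a \<notin> used_nums F \<Phi>) \<notin> used_nums F \<Phi>"
  using ex_new_if_finite[OF infinite_UNIV_nat finite_used_nums] by (rule LeastI_ex)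

lemma ex_literal_occ: "\<exists>p b P. sub F p = Some (Lit b P)"
  by (induction F) (metis sub.simps)+

(* Every formula has a politeral unit, so there is always at least one prompt. *)
lemma ex_politeral_unit: "\<exists>M. politeral_unit F M"
proof -
  obtain p b P where "sub F p = Some (Lit b P)" using ex_literal_occ[of F] by (elim exE)
  then have "politeral_unit F (p, replicate (mdepth F p) (\<lambda>_. False))"
    by (simp add: politeral_unit_def is_unit_def is_occ_def is_politeral_def)
  then show ?thesis ..
qed

section \<open>Moves of the counterstrategy\<close>

lemma bot_moves_append: "\<exists>xs. bot_moves F \<Phi> \<alpha>s = \<Phi> @ xs \<and> length xs = length \<alpha>s"
proof (induction \<alpha>s arbitrary: \<Phi>)
  case (Cons \<alpha> \<alpha>s)
  then show ?case by (metis append.assoc append_Cons append_Nil bot_moves.simps(2) length_Cons)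
qed simp

lemma bot_moves_serve: "\<alpha> \<in> set \<alpha>s \<Longrightarrow> \<exists>c. (Bot, \<alpha> @ dec c) \<in> set (bot_moves F \<Phi> \<alpha>s)"
proof (induction \<alpha>s arbitrary: \<Phi>)
  case (Cons \<beta> \<alpha>s)
  show ?case
  proof (cases "\<alpha> = \<beta>")
    case True
    let ?\<Phi>' = "\<Phi> @ [(Bot, \<beta> @ dec (LEAST a. a \<notin> used_nums F \<Phi>))]"
    obtain xs where "bot_moves F ?\<Phi>' \<alpha>s = ?\<Phi>' @ xs"
      using bot_moves_append by blast
    then show ?thesis using True by auto
  next
    case False
    then show ?thesis using Cons by auto
  qed
qed simp

lemma pos_after_Suc:
  "pos_after F t (Suc k) = bot_moves F (pos_after F t k) (prompt_addrs F (pos_after F t k)) @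
     (case t k of None \<Rightarrow> [] | Some m \<Rightarrow> [(Top, m)])"
  by (simp add: Let_def)

definition fresh_bot_numerals :: "'a fmla \<Rightarrow> position \<Rightarrow> bool" where
  "fresh_bot_numerals F \<Phi> \<longleftrightarrow> (\<forall>j<length \<Phi>. fst (\<Phi> ! j) = Bot \<longrightarrow>
     (\<exists>h c. politeral_funit F h \<and> snd (\<Phi> ! j) = addr F h @ dec c \<and> c \<notin> used_nums F (take j \<Phi>)))"

lemma fresh_bot_numerals_snoc:
  assumes "fresh_bot_numerals F \<Phi>"
    and "fst e = Bot \<Longrightarrow> \<exists>h c. politeral_funit F h \<and> snd e = addr F h @ dec c \<and> c \<notin> used_nums F \<Phi>"
  shows "fresh_bot_numerals F (\<Phi> @ [e])"
  using assms unfolding fresh_bot_numerals_def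
  by (auto simp: nth_append less_Suc_eq)

lemma fresh_bot_numerals_bot_moves:
  assumes "fresh_bot_numerals F \<Phi>" "\<forall>\<alpha>\<in>set \<alpha>s. \<exists>h. politeral_funit F h \<and> \<alpha> = addr F h"
  shows "fresh_bot_numerals F (bot_moves F \<Phi> \<alpha>s)"
  using assms
proof (induction \<alpha>s arbitrary: \<Phi>)
  case (Cons \<alpha> \<alpha>s)
  then obtain h where "politeral_funit F h" "\<alpha> = addr F h" by auto
  then have "\<exists>h c. politeral_funit F h \<and> \<alpha> @ dec (LEAST a. a \<notin> used_nums F \<Phi>) = addr F h @ dec c
      \<and> c \<notin> used_nums F \<Phi>"
    using least_unused by blast
  then have "fresh_bot_numerals F (\<Phi> @ [(Bot, \<alpha> @ dec (LEAST a. a \<notin> used_nums F \<Phi>))])"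
    using Cons.prems(1) by (intro fresh_bot_numerals_snoc) auto
  then show ?case using Cons.IH Cons.prems(2) by simp
qed simp

lemma fresh_bot_numerals_pos_after: "fresh_bot_numerals F (pos_after F t k)"
proof (induction k)
  case 0
  then show ?case by (simp add: fresh_bot_numerals_def)
next
  case (Suc k)
  have "\<forall>\<alpha>\<in>set (prompt_addrs F (pos_after F t k)). \<exists>h. politeral_funit F h \<and> \<alpha> = addr F h"
    unfolding set_prompt_addrs is_prompt_def by blast
  then have "fresh_bot_numerals F (bot_moves F (pos_after F t k) (prompt_addrs F (pos_after F t k)))"
    by (rule fresh_bot_numerals_bot_moves[OF Suc.IH])
  then show ?case
    by (cases "t k") (auto simp: pos_after_Suc intro: fresh_bot_numerals_snoc)
qed

lemma fresh_numeral_index_unique: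
  assumes fresh: "fresh_bot_numerals F \<Phi>" and "i < length \<Phi>" "j < length \<Phi>"
    and "\<Phi> ! i = (Bot, addr F f @ dec a)" "\<Phi> ! j = (Bot, addr F g @ dec a)"
    and "politeral_funit F f" "politeral_funit F g"
  shows "i = j"
proof -
  have later_is_fresh: False
    if ij: "i' < j'" "j' < length \<Phi>"
      and moves: "\<Phi> ! i' = (Bot, addr F f' @ dec a)" "\<Phi> ! j' = (Bot, addr F g' @ dec a)"
      and f': "politeral_funit F f'" for i' j' f' g'
  proof -
    obtain h c where h: "snd (\<Phi> ! j') = addr F h @ dec c" "c \<notin> used_nums F (take j' \<Phi>)"
      using fresh ij(2) moves(2) unfolding fresh_bot_numerals_def by fastforce
    have "a = c" using h(1) moves(2) addr_numeral_inj by simp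
    moreover have "(Bot, addr F f' @ dec a) \<in> set (take j' \<Phi>)"
      using ij moves(1) by (metis length_take min.absorb4 nth_mem nth_take)
    ultimately show False using h(2) f' unfolding used_nums_def by blast
  qed
  show ?thesis
    using later_is_fresh[of i j f g] later_is_fresh[of j i g f] assms
    by (cases i j rule: linorder_cases) auto
qed

section \<open>Prompt funits of a unit\<close>

(* The funital restriction of a politeral unit to the current prompt height; it is a prompt,
   so it receives a Bot move in the next round. *)
definition prompt_funit :: "'a fmla \<Rightarrow> position \<Rightarrow> path \<times> ibits list \<Rightarrow> path \<times> bool list list" where
  "prompt_funit F \<Phi> M = (fst M, map (\<lambda>y. map y [0..<prompt_height F \<Phi>]) (snd M))"

lemma prompt_funit_politeral: "politeral_unit F M \<Longrightarrow> politeral_funit F (prompt_funit F \<Phi> M)"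
  unfolding politeral_unit_def politeral_funit_def is_unit_def is_funit_def prompt_funit_def by simp

lemma prompt_funit_restr: "funital_restr (snd (prompt_funit F \<Phi> M)) (snd M)"
  unfolding funital_restr_def prompt_funit_def by (simp add: list_all2_map1 list_all2_refl)

lemma prompt_funit_height:
  "snd M \<noteq> [] \<Longrightarrow> height (snd (prompt_funit F \<Phi> M)) = prompt_height F \<Phi>"
  by (rule height_const) (auto simp: prompt_funit_def)

lemma prompt_funit_is_prompt: "politeral_unit F M \<Longrightarrow> is_prompt F \<Phi> (prompt_funit F \<Phi> M)"
proof -
  assume M: "politeral_unit F M"
  have "regular (snd (prompt_funit F \<Phi> M))" by (auto simp: regular_def prompt_funit_def)
  moreover have "snd (prompt_funit F \<Phi> M) = [] \<or> height (snd (prompt_funit F \<Phi> M)) = prompt_height F \<Phi>"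
    using prompt_funit_height[of M F \<Phi>] by (cases "snd M = []") (auto simp: prompt_funit_def)
  ultimately show ?thesis unfolding is_prompt_def using prompt_funit_politeral[OF M] by blast
qed

lemma round_moves_in_prompt_funit:
  assumes "politeral_unit F M"
  shows "\<exists>c. (Bot, addr F (prompt_funit F (pos_after F t k) M) @ dec c) \<in> set (pos_after F t (Suc k))"
proof -
  let ?\<Phi> = "pos_after F t k"
  have "addr F (prompt_funit F ?\<Phi> M) \<in> set (prompt_addrs F ?\<Phi>)"
    unfolding set_prompt_addrs using prompt_funit_is_prompt[OF assms] by blast
  then obtain c where "(Bot, addr F (prompt_funit F ?\<Phi> M) @ dec c) \<in> set (bot_moves F ?\<Phi> (prompt_addrs F ?\<Phi>))"
    using bot_moves_serve by blast
  then show ?thesis unfolding pos_after_Suc by auto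
qed

(* Each round adds a move, so the positions exhaust the whole run. *)
lemma length_pos_after: "k \<le> length (pos_after F t k)"
proof (induction k)
  case (Suc k)
  let ?\<Phi> = "pos_after F t k"
  obtain M where "politeral_unit F M" using ex_politeral_unit by blast
  then have "addr F (prompt_funit F ?\<Phi> M) \<in> set (prompt_addrs F ?\<Phi>)"
    unfolding set_prompt_addrs using prompt_funit_is_prompt by blast
  moreover obtain xs where "bot_moves F ?\<Phi> (prompt_addrs F ?\<Phi>) = ?\<Phi> @ xs"
    "length xs = length (prompt_addrs F ?\<Phi>)"
    using bot_moves_append by blast
  ultimately have "length ?\<Phi> < length (pos_after F t (Suc k))"
    unfolding pos_after_Suc by (cases xs) auto
  with Suc.IH show ?case by simp
qed simp

lemma prompt_height_pos_after:
  assumes "politeral_unit F M" "snd M \<noteq> []"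
  shows "k \<le> prompt_height F (pos_after F t k)"
proof (induction k)
  case (Suc k)
  let ?f = "prompt_funit F (pos_after F t k) M"
  obtain c where "(Bot, addr F ?f @ dec c) \<in> set (pos_after F t (Suc k))"
    using round_moves_in_prompt_funit[OF assms(1)] by blast
  then have "active F (pos_after F t (Suc k)) ?f"
    using prompt_funit_politeral[OF assms(1)] unfolding active_def politeral_funit_def by blast
  then have "height (snd ?f) < prompt_height F (pos_after F t (Suc k))"
    by (rule prompt_height_bound)
  moreover have "height (snd ?f) = prompt_height F (pos_after F t k)"
    by (rule prompt_funit_height[OF assms(2)])
  ultimately show ?case using Suc.IH by linarith
qed simp

section \<open>The run generated by the counterstrategy\<close>

definition plays :: "'a fmla \<Rightarrow> (nat \<Rightarrow> string option) \<Rightarrow> (nat \<Rightarrow> labmove) \<Rightarrow> bool" where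
  "plays F t \<Omega> \<longleftrightarrow> (\<forall>k n. n < length (pos_after F t k) \<longrightarrow> \<Omega> n = pos_after F t k ! n)"

lemma run_numeral_unique:
  assumes play: "plays F t \<Omega>"
    and "\<Omega> i = (Bot, addr F f @ dec c)" "\<Omega> j = (Bot, addr F g @ dec c)"
    and "politeral_funit F f" "politeral_funit F g"
  shows "i = j"
proof -
  let ?\<Phi> = "pos_after F t (Suc (i + j))"
  have "Suc (i + j) \<le> length ?\<Phi>" by (rule length_pos_after)
  then have "i < length ?\<Phi>" "j < length ?\<Phi>" by auto
  moreover have "?\<Phi> ! i = (Bot, addr F f @ dec c)" "?\<Phi> ! j = (Bot, addr F g @ dec c)"
    using play calculation assms(2,3) unfolding plays_def by metis+
  ultimately show ?thesis
    using fresh_numeral_index_unique[OF fresh_bot_numerals_pos_after] assms(4,5) by blast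
qed

lemma run_moves_in_prompt_funit:
  assumes "plays F t \<Omega>" and M: "politeral_unit F M"
  shows "\<exists>i c. \<Omega> i = (Bot, addr F (prompt_funit F (pos_after F t k) M) @ dec c) \<and>
    dec c \<in> moves_of Bot (unit_proj F \<Omega> M)"
proof -
  let ?f = "prompt_funit F (pos_after F t k) M"
  obtain c where "(Bot, addr F ?f @ dec c) \<in> set (pos_after F t (Suc k))"
    using round_moves_in_prompt_funit[OF M] by blast
  then obtain i where i: "\<Omega> i = (Bot, addr F ?f @ dec c)"
    using assms(1) unfolding plays_def by (metis in_set_conv_nth)
  moreover have "?f = (fst M, snd ?f)" by (simp add: prompt_funit_def)
  then have "dec c \<in> moves_of Bot (unit_proj F \<Omega> M)"
    using i prompt_funit_restr M unit_proj_moves unfolding politeral_unit_def by metis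
  ultimately show ?thesis by blast
qed

lemma distinguishing_round:
  assumes M: "politeral_unit F M" and M': "politeral_unit F M'" and "M \<noteq> M'"
  shows "\<exists>k. \<not> (fst M = fst M' \<and> funital_restr (snd (prompt_funit F (pos_after F t k) M)) (snd M'))"
proof (cases "fst M = fst M'")
  case True
  then have "snd M \<noteq> snd M'" "length (snd M) = length (snd M')"
    using assms unfolding politeral_unit_def is_unit_def by (auto simp: prod_eq_iff)
  then obtain i where i: "i < length (snd M)" "snd M ! i \<noteq> snd M' ! i"
    using nth_equalityI by blast
  then obtain j where j: "(snd M ! i) j \<noteq> (snd M' ! i) j" by blast
  let ?H = "prompt_height F (pos_after F t (Suc j))"
  have "Suc j \<le> ?H" using prompt_height_pos_after[OF M] i(1) by fastforce
  have "\<not> funital_restr (snd (prompt_funit F (pos_after F t (Suc j)) M)) (snd M')"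
  proof
    assume "funital_restr (snd (prompt_funit F (pos_after F t (Suc j)) M)) (snd M')"
    then have "map (snd M ! i) [0..<?H] = map (snd M' ! i) [0..<?H]"
      using i(1) unfolding funital_restr_def prompt_funit_def by (auto dest: list_all2_nthD)
    then have "(snd M ! i) j = (snd M' ! i) j"
      using \<open>Suc j \<le> ?H\<close> by (metis Suc_le_eq add_0 diff_zero length_upt nth_map nth_upt)
    with j show False ..
  qed
  then show ?thesis by blast
qed blast

theorem lemma7p1:
  fixes F0 :: "'a fmla" and \<Omega> :: "nat \<Rightarrow> labmove"
  assumes "generated_run F0 \<Omega>" and "legal_run F0 \<Omega>"
    and "politeral_unit F0 L"
  shows "\<forall>M M'. opposite F0 \<Omega> L M \<and> opposite F0 \<Omega> L M' \<longrightarrow> M = M'"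
proof (intro allI impI)
  fix M M' assume "opposite F0 \<Omega> L M \<and> opposite F0 \<Omega> L M'"
  then have M: "politeral_unit F0 M" and M': "politeral_unit F0 M'"
    and same_bot: "moves_of Bot (unit_proj F0 \<Omega> M) = moves_of Bot (unit_proj F0 \<Omega> M')"
    unfolding opposite_def by (metis neg_player.simps(1))+
  obtain t where play: "plays F0 t \<Omega>"
    using assms(1) unfolding generated_run_def plays_def by blast
  show "M = M'"
  proof (rule ccontr)
    assume "M \<noteq> M'"
    then obtain k where not_restr:
      "\<not> (fst M = fst M' \<and> funital_restr (snd (prompt_funit F0 (pos_after F0 t k) M)) (snd M'))"
      using distinguishing_round[OF M M'] by blast
    let ?f = "prompt_funit F0 (pos_after F0 t k) M"
    obtain i c where i: "\<Omega> i = (Bot, addr F0 ?f @ dec c)"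
      and "dec c \<in> moves_of Bot (unit_proj F0 \<Omega> M)"
      using run_moves_in_prompt_funit[OF play M] by blast
    then obtain j ws' where ws': "funital_restr ws' (snd M')"
      and j: "\<Omega> j = (Bot, addr F0 (fst M', ws') @ dec c)"
      using same_bot M' unit_proj_moves politeral_unit_def by blast
    have "i = j"
      using run_numeral_unique[OF play i j prompt_funit_politeral[OF M] restr_politeral_funit[OF M' ws']] .
    then have "addr F0 ?f = addr F0 (fst M', ws')" using i j by simp
    then have "?f = (fst M', ws')"
      using addr_inj prompt_funit_politeral[OF M] restr_politeral_funit[OF M' ws']
      unfolding politeral_funit_def by blast
    then show False using not_restr ws' by (simp add: prompt_funit_def)
  qed
qed

end
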